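(* Let $X_1, X_2, X_3$ be i.i.d. with Lebesgue density $f$ on $\mathbb{R}^k$, and $Y_1, Y_2, Y_3$ i.i.d. with Lebesgue density $g$ on $\mathbb{R}^k$, where $f,g \in L^2(\mathbb{R}^k)$ and $X_i$ and $Y_j$ are independent for all $i,j$. Let $d$ be a homogeneous and translation invariant distance function on $\mathbb{R}^k$, let $\gamma:[0,\infty)\to[0,\infty)$ be continuous and strictly increasing with $\gamma(0)=0$, and set $h := \gamma\circ d$. If $f$ and $g$ have uniformly bounded centered oscillation with respect to $h$, then $$ f = g \quad \Longleftrightarrow \quad h(X_1,X_2) \overset{\mathcal{D}}{=} h(Y_1,Y_2) \overset{\mathcal{D}}{=} h(X_3,Y_3). $$
   Context: A distance function $d:\mathbb{R}^k\times\mathbb{R}^k\to[0,\infty)$ is nonnegative, continuous, with $d(x,y)=0$ if and only if $x=y$; it is homogeneous and translation invariant if $d(ax+b, ay+b) = |a|\, d(x,y)$ for all $a\in\mathbb{R}$ and $x,y,b\in\mathbb{R}^k$. For a function $h:\mathbb{R}^k\times\mathbb{R}^k\to[0,\infty)$, the $h$-ball is $B_t^{(h)}(x) := \{y\in\mathbb{R}^k : h(x,y) < t\}$ and $\Phi(x,t) := \mu(B_t^{(h)}(x))$, where $\mu$ is Lebesgue measure on $\mathbb{R}^k$. The centered oscillation of $f$ at $x$ on scale $\epsilon$ with respect to $h$ is $A_f^{(h)}(x,\epsilon) := \sup_{0<t<\epsilon} \frac{1}{\Phi(x,t)}\int_{B_t^{(h)}(x)} |f(y)-f(x)|\,dy$;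 it is uniformly bounded (on the scale $\epsilon$) if there is $C>0$ with $A_f^{(h)}(x,\epsilon) < C$ for almost every $x$. Here $\overset{\mathcal{D}}{=}$ denotes equality in distribution. *)

theory Defs
  imports "HOL-Probability.Probability"
begin

definition distance_fun :: "('a::euclidean_space \<Rightarrow> 'a \<Rightarrow> real) \<Rightarrow> bool" where
  "distance_fun d \<longleftrightarrow>
     (\<forall>x y. d x y \<ge> 0) \<and>
     continuous_on UNIV (\<lambda>p. d (fst p) (snd p)) \<and>
     (\<forall>x y. d x y = 0 \<longleftrightarrow> x = y)"

definition homog_transl_inv :: "('a::euclidean_space \<Rightarrow> 'a \<Rightarrow> real) \<Rightarrow> bool" where
  "homog_transl_inv d \<longleftrightarrow>
     (\<forall>a x y b. d (a *\<^sub>R x + b) (a *\<^sub>R y + b) = \<bar>a\<bar> * d x y)"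

definition hball :: "('a \<Rightarrow> 'a \<Rightarrow> real) \<Rightarrow> 'a \<Rightarrow> real \<Rightarrow> 'a set" where
  "hball h x t = {y. h x y < t}"

definition Phi :: "('a::euclidean_space \<Rightarrow> 'a \<Rightarrow> real) \<Rightarrow> 'a \<Rightarrow> real \<Rightarrow> ennreal" where
  "Phi h x t = emeasure lborel (hball h x t)"

definition centered_osc ::
  "('a::euclidean_space \<Rightarrow> 'a \<Rightarrow> real) \<Rightarrow> ('a \<Rightarrow> real) \<Rightarrow> 'a \<Rightarrow> real \<Rightarrow> ennreal" where
  "centered_osc h f x \<epsilon> =
     (SUP t\<in>{0<..<\<epsilon>}.
        (\<integral>\<^sup>+ y. ennreal \<bar>f y - f x\<bar> * indicator (hball h x t) y \<partial>lborel) / Phi h x t)"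

definition unif_bdd_osc :: "('a::euclidean_space \<Rightarrow> 'a \<Rightarrow> real) \<Rightarrow> ('a \<Rightarrow> real) \<Rightarrow> bool" where
  "unif_bdd_osc h f \<longleftrightarrow>
     (\<exists>\<epsilon>>0. \<exists>C>0. AE x in lborel. centered_osc h f x \<epsilon> < ennreal C)"

end

theory Submission
  imports Defs
begin

text \<open>
  Translation invariance and homogeneity give \<open>d x y = N (y - x)\<close> for the gauge \<open>N = d 0\<close>, so
  \<open>h\<close>-balls are translates of the gauge balls \<open>B\<^sub>r = {v. N v < r}\<close> and, \<open>\<gamma>\<close> being strictly
  increasing, \<open>P(h(X, Y) < \<gamma> r) = \<integral>\<integral> a(x) b(y) 1[y - x \<in> B\<^sub>r] dx dy\<close> for independent \<open>X, Y\<close>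
  with densities \<open>a, b\<close>. This is a symmetric bilinear form in the densities, so equality of the
  three laws forces \<open>\<integral> u(x) \<integral>\<^bsub>B\<^sub>r\<^esub> u(x + v) dv dx = 0\<close> for \<open>u = f - g\<close> and all \<open>r > 0\<close>.
  Dividing by \<open>|B\<^sub>r| = r\<^sup>k |B\<^sub>1|\<close>, the inner averages tend to \<open>u\<close> almost everywhere (Lebesgue
  differentiation along gauge balls, obtained from cubes), and bounded oscillation dominates them
  by \<open>|u| + C\<close>; since \<open>u \<in> L\<^sup>2\<close>, dominated convergence yields \<open>\<integral> u\<^sup>2 = 0\<close>.
\<close>

section \<open>Lebesgue points with respect to centred cubes\<close>

lemma AE_tendsto_corner_cube_average:
  fixes w :: "'a::euclidean_space \<Rightarrow> real"
  assumes w: "\<And>a b. set_integrable lborel (cbox a b) w"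
  shows "AE x in lborel.
    ((\<lambda>h. (LINT y:cbox x (x + h *\<^sub>R One)|lborel. w y) / h ^ DIM('a)) \<longlongrightarrow> w x) (at_right 0)"
proof -
  obtain N where N: "negligible N"
    and lim: "\<And>x e. x \<notin> N \<Longrightarrow> 0 < e \<Longrightarrow> \<exists>d>0. \<forall>h. 0 < h \<and> h < d \<longrightarrow>
                 norm (integral (cbox x (x + h *\<^sub>R One)) w /\<^sub>R h ^ DIM('a) - w x) < e"
    using integrable_ccontinuous_explicit[of w] set_borel_integral_eq_integral(1)[OF w] by blast
  have "AE x in lborel. x \<notin> N"
    using AE_not_in[of N lebesgue] N by (simp add: negligible_iff_null_sets AE_completion_iff)
  then show ?thesis
  proof eventually_elim
    case (elim x)
    show ?case
    proof (rule tendstoI)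
      fix e :: real assume "0 < e"
      then obtain d where "d > 0" and d: "\<And>h. 0 < h \<Longrightarrow> h < d \<Longrightarrow>
          norm (integral (cbox x (x + h *\<^sub>R One)) w /\<^sub>R h ^ DIM('a) - w x) < e"
        using lim[OF elim] by blast
      show "\<forall>\<^sub>F h in at_right 0. dist ((LINT y:cbox x (x + h *\<^sub>R One)|lborel. w y) / h ^ DIM('a)) (w x) < e"
        unfolding eventually_at_right_field using \<open>d > 0\<close> d
        by (auto simp: set_borel_integral_eq_integral(2)[OF w] dist_norm divide_inverse_commute)
    qed
  qed
qed

text \<open>
  The library differentiates integrals only over cubes having the point as lowest corner.
  Reflections in coordinate hyperplanes move such cubes into the other \<open>2\<^sup>k\<close> orthants,
  which together cover the centred cube.
\<close>

definition coord_reflect :: "'a set \<Rightarrow> 'a::euclidean_space \<Rightarrow> 'a" where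
  "coord_reflect J x = (\<Sum>j\<in>Basis. ((if j \<in> J then -1 else 1) * (x \<bullet> j)) *\<^sub>R j)"

lemma inner_coord_reflect:
  "j \<in> Basis \<Longrightarrow> coord_reflect J x \<bullet> j = (if j \<in> J then -1 else 1) * (x \<bullet> j)"
  unfolding coord_reflect_def by simp

lemma coord_reflect_coord_reflect [simp]: "coord_reflect J (coord_reflect J x) = x"
  by (rule euclidean_eqI) (simp add: inner_coord_reflect)

lemma coord_reflect_add: "coord_reflect J (x + y) = coord_reflect J x + coord_reflect J y"
  by (rule euclidean_eqI) (simp add: inner_coord_reflect algebra_simps)

lemma coord_reflect_measurable [measurable]: "coord_reflect J \<in> borel_measurable borel"
  unfolding coord_reflect_def[abs_def] by simp

lemma distr_coord_reflect_lborel: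
  "distr lborel borel (coord_reflect J) = (lborel :: 'a::euclidean_space measure)"
proof -
  have "(\<Prod>j\<in>(Basis::'a set). \<bar>if j \<in> J then -1 else 1::real\<bar>) = 1"
    by (rule prod.neutral) auto
  then show ?thesis
    using lborel_affine_euclidean[where c="\<lambda>j. if j \<in> J then -1 else (1::real)" and t="0::'a"]
    by (simp add: density_1 coord_reflect_def[abs_def])
qed

lemma nn_integral_lborel_transl:
  fixes G :: "'a::euclidean_space \<Rightarrow> ennreal"
  assumes [measurable]: "G \<in> borel_measurable borel"
  shows "(\<integral>\<^sup>+y. G y \<partial>lborel) = (\<integral>\<^sup>+v. G (x + v) \<partial>lborel)"
  by (subst lborel_distr_plus[of x, symmetric], subst nn_integral_distr) auto

lemma integral_lborel_transl:
  fixes G :: "'a::euclidean_space \<Rightarrow> real"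
  assumes [measurable]: "G \<in> borel_measurable borel"
  shows "(\<integral>y. G y \<partial>lborel) = (\<integral>v. G (x + v) \<partial>lborel)"
  by (subst lborel_distr_plus[of x, symmetric], subst integral_distr) auto

lemma integrable_lborel_transl:
  fixes G :: "'a::euclidean_space \<Rightarrow> real"
  assumes "integrable lborel G"
  shows "integrable lborel (\<lambda>v. G (x + v))"
  using integrable_distr_eq[of "(+) x" lborel borel G] assms
  by (simp add: lborel_distr_plus borel_measurable_integrable)

lemma nn_integral_corner_cube_eq_set_integral:
  fixes w :: "'a::euclidean_space \<Rightarrow> real"
  assumes w: "set_integrable lborel (cbox z (z + a *\<^sub>R One)) w" and nonneg: "\<And>y. 0 \<le> w y"
  shows "(\<integral>\<^sup>+y. ennreal (w (z + y)) * indicator (cbox 0 (a *\<^sub>R One)) y \<partial>lborel)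
    = ennreal (LINT y:cbox z (z + a *\<^sub>R One)|lborel. w y)"
proof -
  let ?S = "cbox z (z + a *\<^sub>R One)"
  have [measurable]: "(\<lambda>y. indicator ?S y *\<^sub>R w y) \<in> borel_measurable borel"
    using borel_measurable_integrable[OF w[unfolded set_integrable_def]] by simp
  have "ennreal (LINT y:?S|lborel. w y) = (\<integral>\<^sup>+y. ennreal (indicator ?S y *\<^sub>R w y) \<partial>lborel)"
    unfolding set_lebesgue_integral_def
    using w[unfolded set_integrable_def] nonneg by (subst nn_integral_eq_integral) auto
  also have "\<dots> = (\<integral>\<^sup>+y. ennreal (indicator ?S (z + y) *\<^sub>R w (z + y)) \<partial>lborel)"
    by (rule nn_integral_lborel_transl) measurable
  also have "\<dots> = (\<integral>\<^sup>+y. ennreal (w (z + y)) * indicator (cbox 0 (a *\<^sub>R One)) y \<partial>lborel)"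
    by (intro nn_integral_cong) (simp add: indicator_def mem_box inner_add_left)
  finally show ?thesis ..
qed

lemma set_integrable_cbox_abs_diff_const:
  fixes v :: "'a::euclidean_space \<Rightarrow> real"
  assumes "integrable lborel v"
  shows "set_integrable lborel (cbox a b) (\<lambda>y. \<bar>v y - q\<bar>)"
proof -
  have "set_integrable lborel (cbox a b) v"
    using assms unfolding set_integrable_def by (intro integrable_mult_indicator) simp_all
  moreover have "set_integrable lborel (cbox a b) (\<lambda>_. q)"
    unfolding set_integrable_def
    by (intro integrable_scaleR_left integrable_real_indicator) (use emeasure_lborel_cbox_finite in auto)
  ultimately show ?thesis
    by (intro set_integrable_abs set_integral_diff)
qed

lemma AE_corner_cube_reflect_le:
  fixes v :: "'a::euclidean_space \<Rightarrow> real"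
  assumes v: "integrable lborel v"
  shows "AE x in lborel. \<forall>e>0. \<forall>\<^sub>F a in at_right 0.
    (\<integral>\<^sup>+y. ennreal \<bar>v (x + coord_reflect J y) - q\<bar> * indicator (cbox 0 (a *\<^sub>R One)) y \<partial>lborel)
      \<le> ennreal (a ^ DIM('a) * (\<bar>v x - q\<bar> + e))"
proof -
  define w where "w y = \<bar>v (coord_reflect J y) - q\<bar>" for y
  have "integrable lborel (\<lambda>y. v (coord_reflect J y))"
    using integrable_distr_eq[of "coord_reflect J" lborel borel v] v
    by (simp add: distr_coord_reflect_lborel borel_measurable_integrable)
  then have w_int: "set_integrable lborel (cbox a b) w" for a b
    unfolding w_def by (rule set_integrable_cbox_abs_diff_const)
  have "AE z in distr lborel borel (coord_reflect J).
      ((\<lambda>a. (LINT y:cbox z (z + a *\<^sub>R One)|lborel. w y) / a ^ DIM('a)) \<longlongrightarrow> w z) (at_right 0)"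
    unfolding distr_coord_reflect_lborel by (rule AE_tendsto_corner_cube_average[OF w_int])
  then have "AE x in lborel. ((\<lambda>a. (LINT y:cbox (coord_reflect J x) (coord_reflect J x + a *\<^sub>R One)|lborel. w y)
      / a ^ DIM('a)) \<longlongrightarrow> \<bar>v x - q\<bar>) (at_right 0)"
    by (auto dest: AE_distrD[rotated] simp: w_def)
  then show ?thesis
  proof eventually_elim
    case (elim x)
    define z where "z = coord_reflect J x"
    have eq: "(\<integral>\<^sup>+y. ennreal \<bar>v (x + coord_reflect J y) - q\<bar> * indicator (cbox 0 (a *\<^sub>R One)) y \<partial>lborel)
        = ennreal (LINT y:cbox z (z + a *\<^sub>R One)|lborel. w y)" for a
      using nn_integral_corner_cube_eq_set_integral[OF w_int, of z a]
      by (simp add: w_def z_def coord_reflect_add)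
    show ?case
    proof (intro allI impI)
      fix e :: real assume "e > 0"
      with elim have "\<forall>\<^sub>F a in at_right 0.
          dist ((LINT y:cbox z (z + a *\<^sub>R One)|lborel. w y) / a ^ DIM('a)) \<bar>v x - q\<bar> < e"
        unfolding z_def by (rule tendstoD)
      moreover have "\<forall>\<^sub>F a in at_right (0::real). 0 < a"
        by (rule eventually_at_right_less)
      ultimately show "\<forall>\<^sub>F a in at_right 0.
          (\<integral>\<^sup>+y. ennreal \<bar>v (x + coord_reflect J y) - q\<bar> * indicator (cbox 0 (a *\<^sub>R One)) y \<partial>lborel)
            \<le> ennreal (a ^ DIM('a) * (\<bar>v x - q\<bar> + e))"
      proof eventually_elim
        case (elim a)
        then have "(LINT y:cbox z (z + a *\<^sub>R One)|lborel. w y) / a ^ DIM('a) < \<bar>v x - q\<bar> + e"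
          by (simp add: dist_real_def)
        then show ?case
          using \<open>0 < a\<close> unfolding eq by (intro ennreal_leI) (simp add: pos_divide_less_eq mult.commute)
      qed
    qed
  qed
qed

lemma coord_reflect_negative_mem_cube:
  assumes "v \<in> cbox (-(a *\<^sub>R One)) (a *\<^sub>R One)"
  shows "coord_reflect {j\<in>Basis. v \<bullet> j < 0} v \<in> cbox 0 (a *\<^sub>R One)"
  unfolding mem_box
proof (intro ballI)
  fix i :: 'a assume i: "i \<in> Basis"
  then have "-a \<le> v \<bullet> i" "v \<bullet> i \<le> a"
    using assms by (auto simp: mem_box)
  with i show "0 \<bullet> i \<le> coord_reflect {j\<in>Basis. v \<bullet> j < 0} v \<bullet> i
      \<and> coord_reflect {j\<in>Basis. v \<bullet> j < 0} v \<bullet> i \<le> (a *\<^sub>R One) \<bullet> i"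
    by (auto simp: inner_coord_reflect)
qed

lemma nn_integral_centered_cube_le_reflections:
  fixes F :: "'a::euclidean_space \<Rightarrow> ennreal"
  assumes [measurable]: "F \<in> borel_measurable borel"
  shows "(\<integral>\<^sup>+v. F v * indicator (cbox (-(a *\<^sub>R One)) (a *\<^sub>R One)) v \<partial>lborel)
     \<le> (\<Sum>J\<in>Pow Basis. \<integral>\<^sup>+y. F (coord_reflect J y) * indicator (cbox 0 (a *\<^sub>R One)) y \<partial>lborel)"
proof -
  let ?C = "cbox 0 (a *\<^sub>R One) :: 'a set"
  let ?K = "cbox (-(a *\<^sub>R One)) (a *\<^sub>R One) :: 'a set"
  have "(\<integral>\<^sup>+v. F v * indicator ?K v \<partial>lborel)
      \<le> (\<integral>\<^sup>+v. (\<Sum>J\<in>Pow Basis. F v * indicator ?C (coord_reflect J v)) \<partial>lborel)"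
  proof (rule nn_integral_mono)
    fix v :: 'a
    show "F v * indicator ?K v \<le> (\<Sum>J\<in>Pow Basis. F v * indicator ?C (coord_reflect J v))"
    proof (cases "v \<in> ?K")
      case True
      define J where "J = {j\<in>Basis. v \<bullet> j < 0}"
      have "coord_reflect J v \<in> ?C"
        using True unfolding J_def by (rule coord_reflect_negative_mem_cube)
      then have "F v * indicator ?K v = F v * indicator ?C (coord_reflect J v)"
        using True by simp
      also have "\<dots> \<le> (\<Sum>J\<in>Pow Basis. F v * indicator ?C (coord_reflect J v))"
        by (rule member_le_sum) (auto simp: J_def)
      finally show ?thesis .
    qed simp
  qed
  also have "\<dots> = (\<Sum>J\<in>Pow Basis. \<integral>\<^sup>+v. F v * indicator ?C (coord_reflect J v) \<partial>lborel)"
    by (rule nn_integral_sum) auto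
  also have "\<dots> = (\<Sum>J\<in>Pow Basis. \<integral>\<^sup>+y. F (coord_reflect J y) * indicator ?C y \<partial>lborel)"
  proof (rule sum.cong[OF refl])
    fix J :: "'a set"
    have "(\<integral>\<^sup>+v. F v * indicator ?C (coord_reflect J v) \<partial>lborel)
        = (\<integral>\<^sup>+v. F v * indicator ?C (coord_reflect J v) \<partial>distr lborel borel (coord_reflect J))"
      by (simp add: distr_coord_reflect_lborel)
    also have "\<dots> = (\<integral>\<^sup>+y. F (coord_reflect J y) * indicator ?C (coord_reflect J (coord_reflect J y)) \<partial>lborel)"
      by (rule nn_integral_distr) auto
    finally show "(\<integral>\<^sup>+v. F v * indicator ?C (coord_reflect J v) \<partial>lborel)
        = (\<integral>\<^sup>+y. F (coord_reflect J y) * indicator ?C y \<partial>lborel)"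
      by simp
  qed
  finally show ?thesis .
qed

lemma AE_centered_cube_le:
  fixes u :: "'a::euclidean_space \<Rightarrow> real"
  assumes u: "integrable lborel u"
  shows "AE x in lborel. \<forall>e>0. \<forall>\<^sub>F a in at_right 0.
    (\<integral>\<^sup>+v. ennreal \<bar>u (x + v) - q\<bar> * indicator (cbox (-(a *\<^sub>R One)) (a *\<^sub>R One)) v \<partial>lborel)
      \<le> ennreal ((2 * a) ^ DIM('a) * (\<bar>u x - q\<bar> + e))"
proof -
  have [measurable]: "u \<in> borel_measurable borel"
    using borel_measurable_integrable[OF u] by simp
  let ?corner = "\<lambda>x J a. \<integral>\<^sup>+y. ennreal \<bar>u (x + coord_reflect J y) - q\<bar> * indicator (cbox 0 (a *\<^sub>R One)) y \<partial>lborel"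
  have "AE x in lborel. \<forall>J\<in>Pow (Basis::'a set).
      \<forall>e>0. \<forall>\<^sub>F a in at_right 0. ?corner x J a \<le> ennreal (a ^ DIM('a) * (\<bar>u x - q\<bar> + e))"
    using AE_corner_cube_reflect_le[OF u] by (subst AE_ball_countable) (auto intro: countable_finite)
  then show ?thesis
  proof eventually_elim
    case (elim x)
    show ?case
    proof (intro allI impI)
      fix e :: real assume "e > 0"
      with elim have "\<forall>\<^sub>F a in at_right 0. \<forall>J\<in>Pow (Basis::'a set).
          ?corner x J a \<le> ennreal (a ^ DIM('a) * (\<bar>u x - q\<bar> + e))"
        by (intro eventually_ball_finite) auto
      then show "\<forall>\<^sub>F a in at_right 0.
          (\<integral>\<^sup>+v. ennreal \<bar>u (x + v) - q\<bar> * indicator (cbox (-(a *\<^sub>R One)) (a *\<^sub>R One)) v \<partial>lborel)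
            \<le> ennreal ((2 * a) ^ DIM('a) * (\<bar>u x - q\<bar> + e))"
      proof eventually_elim
        case (elim a)
        have "(\<integral>\<^sup>+v. ennreal \<bar>u (x + v) - q\<bar> * indicator (cbox (-(a *\<^sub>R One)) (a *\<^sub>R One)) v \<partial>lborel)
            \<le> (\<Sum>J\<in>Pow Basis. ?corner x J a)"
          by (rule nn_integral_centered_cube_le_reflections) simp
        also have "\<dots> \<le> (\<Sum>J\<in>Pow (Basis::'a set). ennreal (a ^ DIM('a) * (\<bar>u x - q\<bar> + e)))"
          using elim by (intro sum_mono) auto
        also have "\<dots> = ennreal ((2 * a) ^ DIM('a) * (\<bar>u x - q\<bar> + e))"
          by (simp add: card_Pow ennreal_of_nat_eq_real_of_nat power_mult_distrib ennreal_mult'[symmetric] mult.assoc)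
        finally show ?case .
      qed
    qed
  qed
qed

lemma emeasure_centered_cube:
  assumes "0 \<le> a"
  shows "emeasure lborel (cbox (-(a *\<^sub>R One)) (a *\<^sub>R One) :: 'a::euclidean_space set) = ennreal ((2 * a) ^ DIM('a))"
proof -
  have "(\<Prod>b\<in>(Basis::'a set). (a *\<^sub>R One + a *\<^sub>R One) \<bullet> b) = (\<Prod>b\<in>(Basis::'a set). 2 * a)"
    by (rule prod.cong) (auto simp: inner_add_left)
  then show ?thesis
    using assms by (simp add: emeasure_lborel_cbox_eq)
qed

lemma nn_integral_centered_cube_abs_diff_le:
  fixes u :: "'a::euclidean_space \<Rightarrow> real"
  assumes [measurable]: "u \<in> borel_measurable borel" and "0 \<le> a"
  shows "(\<integral>\<^sup>+v. ennreal \<bar>u (x + v) - u x\<bar> * indicator (cbox (-(a *\<^sub>R One)) (a *\<^sub>R One)) v \<partial>lborel)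
    \<le> (\<integral>\<^sup>+v. ennreal \<bar>u (x + v) - q\<bar> * indicator (cbox (-(a *\<^sub>R One)) (a *\<^sub>R One)) v \<partial>lborel)
      + ennreal \<bar>u x - q\<bar> * ennreal ((2 * a) ^ DIM('a))"
proof -
  let ?K = "cbox (-(a *\<^sub>R One)) (a *\<^sub>R One) :: 'a set"
  have "(\<integral>\<^sup>+v. ennreal \<bar>u (x + v) - u x\<bar> * indicator ?K v \<partial>lborel)
      \<le> (\<integral>\<^sup>+v. ennreal \<bar>u (x + v) - q\<bar> * indicator ?K v + ennreal \<bar>u x - q\<bar> * indicator ?K v \<partial>lborel)"
    by (intro nn_integral_mono)
      (auto simp: ennreal_plus[symmetric] simp del: ennreal_plus intro!: ennreal_leI split: split_indicator)
  also have "\<dots> = (\<integral>\<^sup>+v. ennreal \<bar>u (x + v) - q\<bar> * indicator ?K v \<partial>lborel)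
      + ennreal \<bar>u x - q\<bar> * ennreal ((2 * a) ^ DIM('a))"
    using emeasure_centered_cube[OF assms(2), where 'a='a]
    by (simp add: nn_integral_add nn_integral_cmult_indicator del: emeasure_lborel_cbox)
  finally show ?thesis .
qed

text \<open>
  Only countably many \<open>q\<close> can be handled at once; rational \<open>q\<close> close to \<open>u x\<close> suffice since
  \<open>|u(x + v) - u x| \<le> |u(x + v) - q| + |u x - q|\<close>.
\<close>

lemma AE_lebesgue_point_cube:
  fixes u :: "'a::euclidean_space \<Rightarrow> real"
  assumes u: "integrable lborel u"
  shows "AE x in lborel. \<forall>e>0. \<forall>\<^sub>F a in at_right 0.
    (\<integral>\<^sup>+v. ennreal \<bar>u (x + v) - u x\<bar> * indicator (cbox (-(a *\<^sub>R One)) (a *\<^sub>R One)) v \<partial>lborel)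
      \<le> ennreal (e * a ^ DIM('a))"
proof -
  have [measurable]: "u \<in> borel_measurable borel"
    using borel_measurable_integrable[OF u] by simp
  have "AE x in lborel. \<forall>q\<in>\<rat>. \<forall>e>0. \<forall>\<^sub>F a in at_right 0.
      (\<integral>\<^sup>+v. ennreal \<bar>u (x + v) - q\<bar> * indicator (cbox (-(a *\<^sub>R One)) (a *\<^sub>R One)) v \<partial>lborel)
        \<le> ennreal ((2 * a) ^ DIM('a) * (\<bar>u x - q\<bar> + e))"
    using AE_centered_cube_le[OF u] by (subst AE_ball_countable) (auto simp: countable_rat)
  then show ?thesis
  proof eventually_elim
    case (elim x)
    show ?case
    proof (intro allI impI)
      fix e :: real assume "e > 0"
      define e' where "e' = e / (3 * 2 ^ DIM('a))"
      have "e' > 0" using \<open>e > 0\<close> by (simp add: e'_def)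
      obtain q where "q \<in> \<rat>" and q: "\<bar>u x - q\<bar> < e'"
        using Rats_dense_in_real[of "u x - e'" "u x"] \<open>e' > 0\<close> by auto
      let ?K = "\<lambda>a. cbox (-(a *\<^sub>R One)) (a *\<^sub>R One) :: 'a set"
      have "\<forall>\<^sub>F a in at_right 0. (\<integral>\<^sup>+v. ennreal \<bar>u (x + v) - q\<bar> * indicator (?K a) v \<partial>lborel)
          \<le> ennreal ((2 * a) ^ DIM('a) * (\<bar>u x - q\<bar> + e'))"
        using elim \<open>q \<in> \<rat>\<close> \<open>e' > 0\<close> by blast
      moreover have "\<forall>\<^sub>F a in at_right (0::real). 0 < a"
        by (rule eventually_at_right_less)
      ultimately show "\<forall>\<^sub>F a in at_right 0.
          (\<integral>\<^sup>+v. ennreal \<bar>u (x + v) - u x\<bar> * indicator (?K a) v \<partial>lborel) \<le> ennreal (e * a ^ DIM('a))"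
      proof eventually_elim
        case (elim a)
        have "(\<integral>\<^sup>+v. ennreal \<bar>u (x + v) - u x\<bar> * indicator (?K a) v \<partial>lborel)
            \<le> (\<integral>\<^sup>+v. ennreal \<bar>u (x + v) - q\<bar> * indicator (?K a) v \<partial>lborel)
              + ennreal \<bar>u x - q\<bar> * ennreal ((2 * a) ^ DIM('a))"
          using \<open>0 < a\<close> by (intro nn_integral_centered_cube_abs_diff_le) simp_all
        also have "\<dots> \<le> ennreal ((2 * a) ^ DIM('a) * (\<bar>u x - q\<bar> + e')) + ennreal (\<bar>u x - q\<bar> * (2 * a) ^ DIM('a))"
          using \<open>0 < a\<close> by (intro add_mono[OF elim(1)]) (simp add: ennreal_mult)
        also have "\<dots> = ennreal ((2 * a) ^ DIM('a) * (\<bar>u x - q\<bar> + e') + \<bar>u x - q\<bar> * (2 * a) ^ DIM('a))"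
          using \<open>0 < a\<close> \<open>e' > 0\<close> by (intro ennreal_plus[symmetric]) auto
        also have "\<dots> \<le> ennreal (e * a ^ DIM('a))"
          using q \<open>0 < a\<close> mult_right_mono[OF less_imp_le[OF q], of "(2 * a) ^ DIM('a)"]
          by (intro ennreal_leI) (simp add: e'_def field_simps)
        finally show ?case .
      qed
    qed
  qed
qed

lemma abs_integral_transl_indicator_diff_le:
  fixes u :: "'a::euclidean_space \<Rightarrow> real"
  assumes u: "integrable lborel u" and S: "S \<in> sets borel" "emeasure lborel S < \<infinity>"
  shows "\<bar>(\<integral>v. u (x + v) * indicator S v \<partial>lborel) - u x * measure lborel S\<bar>
           \<le> enn2real (\<integral>\<^sup>+v. ennreal \<bar>u (x + v) - u x\<bar> * indicator S v \<partial>lborel)"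
proof -
  have [measurable]: "u \<in> borel_measurable borel"
    using borel_measurable_integrable[OF u] by simp
  note S(1)[measurable]
  have int_S: "integrable lborel (\<lambda>v. u (x + v) * indicator S v)"
    using S(1) by (intro integrable_real_mult_indicator integrable_lborel_transl[OF u]) simp
  have int_const: "integrable lborel (\<lambda>v. u x * indicator S v)"
    using S by (intro integrable_mult_right integrable_real_indicator) auto
  have "(\<integral>v. u (x + v) * indicator S v \<partial>lborel) - u x * measure lborel S
      = (\<integral>v. u (x + v) * indicator S v - u x * indicator S v \<partial>lborel)"
    using int_S int_const S by simp
  also have "\<dots> = (\<integral>v. (u (x + v) - u x) * indicator S v \<partial>lborel)"
    by (simp add: left_diff_distrib)
  also have "\<bar>\<dots>\<bar> \<le> (\<integral>v. \<bar>u (x + v) - u x\<bar> * indicator S v \<partial>lborel)"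
    using integral_norm_bound[of lborel "\<lambda>v. (u (x + v) - u x) * indicator S v"]
    by (simp add: abs_mult)
  also have "\<dots> = enn2real (\<integral>\<^sup>+v. ennreal (\<bar>u (x + v) - u x\<bar> * indicator S v) \<partial>lborel)"
    by (rule integral_eq_nn_integral) auto
  also have "\<dots> = enn2real (\<integral>\<^sup>+v. ennreal \<bar>u (x + v) - u x\<bar> * indicator S v \<partial>lborel)"
    by (simp add: ennreal_mult' ennreal_indicator)
  finally show ?thesis .
qed

section \<open>Homogeneous gauges and differentiation along their balls\<close>

locale homogeneous_gauge =
  fixes N :: "'a::euclidean_space \<Rightarrow> real"
  assumes continuous_on: "continuous_on UNIV N"
    and scaleR: "\<And>c v. N (c *\<^sub>R v) = \<bar>c\<bar> * N v"
    and eq_0_iff: "\<And>v. N v = 0 \<longleftrightarrow> v = 0"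
    and nonneg: "\<And>v. 0 \<le> N v"
begin

definition gauge_ball :: "real \<Rightarrow> 'a set" where
  "gauge_ball r = {v. N v < r}"

lemma borel_measurable [measurable]: "N \<in> borel_measurable borel"
  using continuous_on by (rule borel_measurable_continuous_onI)

lemma sets_gauge_ball [measurable]: "gauge_ball r \<in> sets borel"
  unfolding gauge_ball_def by measurable

lemma minus_invariant: "N (- v) = N v"
  using scaleR[of "-1" v] by simp

lemma norm_le_gauge:
  obtains m where "m > 0" "\<And>v. m * norm v \<le> N v"
proof -
  obtain s0 :: 'a where s0: "s0 \<in> sphere 0 1" and min: "\<And>s. s \<in> sphere 0 1 \<Longrightarrow> N s0 \<le> N s"
    using continuous_attains_inf[OF compact_sphere _ continuous_on_subset[OF continuous_on], of 0 1]
    by (metis norm_Basis nonempty_Basis mem_sphere_0 subset_UNIV ex_in_conv)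
  have "N s0 * norm v \<le> N v" for v
  proof (cases "v = 0")
    case False
    then have "N s0 \<le> N ((1 / norm v) *\<^sub>R v)"
      by (intro min) simp
    then show ?thesis
      using False by (simp add: scaleR field_simps)
  qed (simp add: nonneg)
  moreover have "N s0 > 0"
    using s0 eq_0_iff[of s0] nonneg[of s0] by auto
  ultimately show ?thesis
    using that by blast
qed

lemma gauge_ball_subset_cube:
  obtains m where "m > 0" "\<And>r. gauge_ball r \<subseteq> cbox (-((r / m) *\<^sub>R One)) ((r / m) *\<^sub>R One)"
proof -
  obtain m where "m > 0" and m: "\<And>v. m * norm v \<le> N v"
    using norm_le_gauge by blast
  have "v \<in> cbox (-((r / m) *\<^sub>R One)) ((r / m) *\<^sub>R One)" if "v \<in> gauge_ball r" for r v
  proof -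
    have "norm v \<le> r / m"
      using that m[of v] \<open>m > 0\<close> by (simp add: gauge_ball_def field_simps)
    then show ?thesis
      using Basis_le_norm[of _ v] by (force simp: mem_box abs_le_iff)
  qed
  with \<open>m > 0\<close> that show ?thesis
    by blast
qed

lemma emeasure_gauge_ball_finite: "emeasure lborel (gauge_ball r) < \<infinity>"
proof -
  obtain m where "\<And>r. gauge_ball r \<subseteq> cbox (-((r / m) *\<^sub>R One)) ((r / m) *\<^sub>R One)"
    using gauge_ball_subset_cube by blast
  then show ?thesis
    by (intro emeasure_bounded_finite bounded_subset[OF bounded_cbox])
qed

lemma emeasure_gauge_ball: "emeasure lborel (gauge_ball r) = ennreal (measure lborel (gauge_ball r))"
  by (rule emeasure_eq_ennreal_measure) (use emeasure_gauge_ball_finite[of r] in simp)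

lemma measure_gauge_ball_1_pos: "0 < measure lborel (gauge_ball 1)"
proof -
  obtain \<delta> where "\<delta> > 0" and \<delta>: "\<And>v. dist v 0 < \<delta> \<Longrightarrow> dist (N v) (N 0) < 1"
    using continuous_on unfolding continuous_on_iff by (meson UNIV_I zero_less_one)
  have "ball 0 \<delta> \<subseteq> gauge_ball 1"
    using \<delta> eq_0_iff[of 0] by (force simp: gauge_ball_def dist_norm)
  then have "measure lborel (ball (0::'a) \<delta>) \<le> measure lborel (gauge_ball 1)"
    using emeasure_gauge_ball_finite by (intro measure_mono_fmeasurable) (auto simp: fmeasurable_def)
  then show ?thesis
    using content_ball_pos[OF \<open>\<delta> > 0\<close>, of "0::'a"] by linarith
qed

lemma gauge_ball_scaleR: "0 < r \<Longrightarrow> gauge_ball r = (\<lambda>v. r *\<^sub>R v) ` gauge_ball 1"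
  unfolding gauge_ball_def
  by (auto simp: scaleR field_simps image_iff intro!: exI[of _ "(1 / r) *\<^sub>R v" for v])

lemma measure_gauge_ball:
  assumes "0 < r"
  shows "measure lborel (gauge_ball r) = r ^ DIM('a) * measure lborel (gauge_ball 1)"
proof -
  have "measure lebesgue ((\<lambda>v. r *\<^sub>R v + 0) ` gauge_ball 1) = \<bar>r\<bar> ^ DIM('a) * measure lebesgue (gauge_ball 1)"
    by (rule measure_lebesgue_affine)
  then show ?thesis
    using assms by (simp add: gauge_ball_scaleR[OF assms, symmetric])
qed

lemma measure_gauge_ball_pos: "0 < r \<Longrightarrow> 0 < measure lborel (gauge_ball r)"
  using measure_gauge_ball_1_pos by (simp add: measure_gauge_ball[of r])

definition gauge_average :: "('a \<Rightarrow> real) \<Rightarrow> 'a \<Rightarrow> real \<Rightarrow> real" where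
  "gauge_average u x r =
     (\<integral>v. u (x + v) * indicator (gauge_ball r) v \<partial>lborel) / measure lborel (gauge_ball r)"

lemma abs_gauge_average_diff_le:
  assumes "integrable lborel u" "0 < r"
  shows "\<bar>gauge_average u x r - u x\<bar>
    \<le> enn2real (\<integral>\<^sup>+v. ennreal \<bar>u (x + v) - u x\<bar> * indicator (gauge_ball r) v \<partial>lborel)
        / measure lborel (gauge_ball r)"
proof -
  have pos: "0 < measure lborel (gauge_ball r)"
    using assms(2) by (rule measure_gauge_ball_pos)
  have "gauge_average u x r - u x
      = ((\<integral>v. u (x + v) * indicator (gauge_ball r) v \<partial>lborel) - u x * measure lborel (gauge_ball r))
          / measure lborel (gauge_ball r)"
    using pos by (simp add: gauge_average_def field_simps)
  then have "\<bar>gauge_average u x r - u x\<bar>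
      = \<bar>(\<integral>v. u (x + v) * indicator (gauge_ball r) v \<partial>lborel) - u x * measure lborel (gauge_ball r)\<bar>
          / measure lborel (gauge_ball r)"
    using pos by simp
  also have "\<dots> \<le> enn2real (\<integral>\<^sup>+v. ennreal \<bar>u (x + v) - u x\<bar> * indicator (gauge_ball r) v \<partial>lborel)
        / measure lborel (gauge_ball r)"
    using pos
    by (intro divide_right_mono abs_integral_transl_indicator_diff_le[OF assms(1)]
        sets_gauge_ball emeasure_gauge_ball_finite) simp
  finally show ?thesis .
qed

lemma AE_tendsto_gauge_average:
  assumes u: "integrable lborel u"
  shows "AE x in lborel. (gauge_average u x \<longlongrightarrow> u x) (at_right 0)"
  using AE_lebesgue_point_cube[OF u]
proof eventually_elim
  case (elim x)
  obtain m where "m > 0" and cube: "\<And>r. gauge_ball r \<subseteq> cbox (-((r / m) *\<^sub>R One)) ((r / m) *\<^sub>R One)"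
    using gauge_ball_subset_cube by blast
  define \<beta> where "\<beta> = measure lborel (gauge_ball 1)"
  have "\<beta> > 0"
    unfolding \<beta>_def by (rule measure_gauge_ball_1_pos)
  show ?case
  proof (rule tendstoI)
    fix e :: real assume "e > 0"
    define e' where "e' = e * \<beta> * m ^ DIM('a) / 2"
    have "e' > 0"
      using \<open>e > 0\<close> \<open>\<beta> > 0\<close> \<open>m > 0\<close> by (simp add: e'_def)
    with elim obtain b where "b > 0" and b: "\<And>a. 0 < a \<Longrightarrow> a < b \<Longrightarrow>
        (\<integral>\<^sup>+v. ennreal \<bar>u (x + v) - u x\<bar> * indicator (cbox (-(a *\<^sub>R One)) (a *\<^sub>R One)) v \<partial>lborel)
          \<le> ennreal (e' * a ^ DIM('a))"
      unfolding eventually_at_right_field by blast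
    show "\<forall>\<^sub>F r in at_right 0. dist (gauge_average u x r) (u x) < e"
      unfolding eventually_at_right_field
    proof (intro exI[of _ "b * m"] conjI allI impI)
      fix r :: real assume "0 < r" "r < b * m"
      have "(\<integral>\<^sup>+v. ennreal \<bar>u (x + v) - u x\<bar> * indicator (gauge_ball r) v \<partial>lborel)
          \<le> (\<integral>\<^sup>+v. ennreal \<bar>u (x + v) - u x\<bar> * indicator (cbox (-((r / m) *\<^sub>R One)) ((r / m) *\<^sub>R One)) v \<partial>lborel)"
        using cube[of r] by (intro nn_integral_mono mult_left_mono) (auto split: split_indicator)
      also have "\<dots> \<le> ennreal (e' * (r / m) ^ DIM('a))"
        using \<open>0 < r\<close> \<open>r < b * m\<close> \<open>m > 0\<close> by (intro b) (auto simp: field_simps)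
      finally have E: "enn2real (\<integral>\<^sup>+v. ennreal \<bar>u (x + v) - u x\<bar> * indicator (gauge_ball r) v \<partial>lborel)
          \<le> e' * (r / m) ^ DIM('a)"
        using \<open>e' > 0\<close> \<open>0 < r\<close> \<open>m > 0\<close> by (intro enn2real_leI) auto
      have "\<bar>gauge_average u x r - u x\<bar>
          \<le> enn2real (\<integral>\<^sup>+v. ennreal \<bar>u (x + v) - u x\<bar> * indicator (gauge_ball r) v \<partial>lborel)
              / measure lborel (gauge_ball r)"
        using u \<open>0 < r\<close> by (rule abs_gauge_average_diff_le)
      also have "\<dots> \<le> e' * (r / m) ^ DIM('a) / measure lborel (gauge_ball r)"
        using E by (rule divide_right_mono) simp
      also have "\<dots> = e / 2"
        using \<open>0 < r\<close> \<open>m > 0\<close> \<open>\<beta> > 0\<close>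
        by (simp add: measure_gauge_ball[OF \<open>0 < r\<close>] e'_def \<beta>_def field_simps)
      finally show "dist (gauge_average u x r) (u x) < e"
        using \<open>e > 0\<close> by (simp add: dist_real_def)
    qed (use \<open>b > 0\<close> \<open>m > 0\<close> in simp)
  qed
qed

definition gauge_osc_bounded :: "('a \<Rightarrow> real) \<Rightarrow> bool" where
  "gauge_osc_bounded u \<longleftrightarrow> (\<exists>r0>0. \<exists>C\<ge>0. AE x in lborel. \<forall>r\<in>{0<..<r0}.
     (\<integral>\<^sup>+v. ennreal \<bar>u (x + v) - u x\<bar> * indicator (gauge_ball r) v \<partial>lborel)
       \<le> ennreal C * emeasure lborel (gauge_ball r))"

lemma gauge_osc_bounded_diff:
  assumes [measurable]: "f \<in> borel_measurable borel" "g \<in> borel_measurable borel"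
    and "gauge_osc_bounded f" "gauge_osc_bounded g"
  shows "gauge_osc_bounded (\<lambda>x. f x - g x)"
proof -
  obtain r1 C1 r2 C2 where "r1 > 0" "C1 \<ge> 0" "r2 > 0" "C2 \<ge> 0"
    and osc_f: "AE x in lborel. \<forall>r\<in>{0<..<r1}. (\<integral>\<^sup>+v. ennreal \<bar>f (x + v) - f x\<bar> * indicator (gauge_ball r) v \<partial>lborel)
       \<le> ennreal C1 * emeasure lborel (gauge_ball r)"
    and osc_g: "AE x in lborel. \<forall>r\<in>{0<..<r2}. (\<integral>\<^sup>+v. ennreal \<bar>g (x + v) - g x\<bar> * indicator (gauge_ball r) v \<partial>lborel)
       \<le> ennreal C2 * emeasure lborel (gauge_ball r)"
    using assms(3,4) unfolding gauge_osc_bounded_def by blast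
  from osc_f osc_g have "AE x in lborel. \<forall>r\<in>{0<..<min r1 r2}.
      (\<integral>\<^sup>+v. ennreal \<bar>(f (x + v) - g (x + v)) - (f x - g x)\<bar> * indicator (gauge_ball r) v \<partial>lborel)
       \<le> ennreal (C1 + C2) * emeasure lborel (gauge_ball r)"
  proof eventually_elim
    case (elim x)
    show ?case
    proof
      fix r assume r: "r \<in> {0<..<min r1 r2}"
      have "(\<integral>\<^sup>+v. ennreal \<bar>(f (x + v) - g (x + v)) - (f x - g x)\<bar> * indicator (gauge_ball r) v \<partial>lborel)
          \<le> (\<integral>\<^sup>+v. ennreal \<bar>f (x + v) - f x\<bar> * indicator (gauge_ball r) v
                + ennreal \<bar>g (x + v) - g x\<bar> * indicator (gauge_ball r) v \<partial>lborel)"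
        by (intro nn_integral_mono)
          (auto simp: ennreal_plus[symmetric] simp del: ennreal_plus intro!: ennreal_leI split: split_indicator)
      also have "\<dots> = (\<integral>\<^sup>+v. ennreal \<bar>f (x + v) - f x\<bar> * indicator (gauge_ball r) v \<partial>lborel)
          + (\<integral>\<^sup>+v. ennreal \<bar>g (x + v) - g x\<bar> * indicator (gauge_ball r) v \<partial>lborel)"
        by (rule nn_integral_add) auto
      also have "\<dots> \<le> ennreal C1 * emeasure lborel (gauge_ball r) + ennreal C2 * emeasure lborel (gauge_ball r)"
        using elim r by (intro add_mono) auto
      also have "\<dots> = ennreal (C1 + C2) * emeasure lborel (gauge_ball r)"
        using \<open>C1 \<ge> 0\<close> \<open>C2 \<ge> 0\<close> by (simp add: distrib_right)
      finally show "(\<integral>\<^sup>+v. ennreal \<bar>(f (x + v) - g (x + v)) - (f x - g x)\<bar> * indicator (gauge_ball r) v \<partial>lborel)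
          \<le> ennreal (C1 + C2) * emeasure lborel (gauge_ball r)" .
    qed
  qed
  then show ?thesis
    unfolding gauge_osc_bounded_def using \<open>r1 > 0\<close> \<open>r2 > 0\<close> \<open>C1 \<ge> 0\<close> \<open>C2 \<ge> 0\<close>
    by (intro exI[of _ "min r1 r2"] exI[of _ "C1 + C2"] conjI) auto
qed

lemma gauge_osc_bounded_imp_average_bounded:
  assumes "gauge_osc_bounded u" and u: "integrable lborel u"
  obtains r0 C where "r0 > 0" "AE x in lborel. \<forall>r\<in>{0<..<r0}. \<bar>gauge_average u x r - u x\<bar> \<le> C"
proof -
  obtain r0 C where "r0 > 0" "C \<ge> 0" and osc: "AE x in lborel. \<forall>r\<in>{0<..<r0}.
     (\<integral>\<^sup>+v. ennreal \<bar>u (x + v) - u x\<bar> * indicator (gauge_ball r) v \<partial>lborel)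
       \<le> ennreal C * emeasure lborel (gauge_ball r)"
    using assms(1) unfolding gauge_osc_bounded_def by blast
  have "AE x in lborel. \<forall>r\<in>{0<..<r0}. \<bar>gauge_average u x r - u x\<bar> \<le> C"
    using osc
  proof eventually_elim
    case (elim x)
    show ?case
    proof
      fix r assume r: "r \<in> {0<..<r0}"
      have pos: "0 < measure lborel (gauge_ball r)"
        using r by (intro measure_gauge_ball_pos) simp
      have "enn2real (\<integral>\<^sup>+v. ennreal \<bar>u (x + v) - u x\<bar> * indicator (gauge_ball r) v \<partial>lborel)
          \<le> C * measure lborel (gauge_ball r)"
        using elim r \<open>C \<ge> 0\<close> by (intro enn2real_leI) (auto simp: emeasure_gauge_ball ennreal_mult)
      then have "enn2real (\<integral>\<^sup>+v. ennreal \<bar>u (x + v) - u x\<bar> * indicator (gauge_ball r) v \<partial>lborel)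
          / measure lborel (gauge_ball r) \<le> C"
        using pos by (simp add: divide_le_eq)
      then show "\<bar>gauge_average u x r - u x\<bar> \<le> C"
        using abs_gauge_average_diff_le[OF u, of r x] r by simp
    qed
  qed
  with \<open>r0 > 0\<close> that show ?thesis
    by blast
qed

lemma borel_measurable_gauge_average [measurable]:
  assumes [measurable]: "u \<in> borel_measurable borel"
  shows "(\<lambda>x. gauge_average u x r) \<in> borel_measurable lborel"
  unfolding gauge_average_def
  by (intro borel_measurable_divide lborel.borel_measurable_lebesgue_integral) measurable

lemma tendsto_integral_mult_gauge_average:
  assumes u: "integrable lborel u" and u2: "integrable lborel (\<lambda>x. (u x)\<^sup>2)"
    and bounded: "AE x in lborel. \<forall>r\<in>{0<..<r0}. \<bar>gauge_average u x r - u x\<bar> \<le> C"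
    and rs: "filterlim rs (at_right 0) sequentially" "\<And>k. rs k \<in> {0<..<r0}"
  shows "(\<lambda>k. \<integral>x. u x * gauge_average u x (rs k) \<partial>lborel) \<longlonglongrightarrow> (\<integral>x. u x * u x \<partial>lborel)"
proof (rule integral_dominated_convergence[where w="\<lambda>x. u x * u x + \<bar>C\<bar> * \<bar>u x\<bar>"])
  have [measurable]: "u \<in> borel_measurable borel"
    using borel_measurable_integrable[OF u] by simp
  show "(\<lambda>x. u x * u x) \<in> borel_measurable lborel" "(\<lambda>x. u x * gauge_average u x (rs k)) \<in> borel_measurable lborel" for k
    by measurable
  show "integrable lborel (\<lambda>x. u x * u x + \<bar>C\<bar> * \<bar>u x\<bar>)"
    using u u2 by (simp add: power2_eq_square)
  show "AE x in lborel. (\<lambda>k. u x * gauge_average u x (rs k)) \<longlonglongrightarrow> u x * u x"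
    using AE_tendsto_gauge_average[OF u]
    by eventually_elim (intro tendsto_mult tendsto_const filterlim_compose[OF _ rs(1)])
  show "AE x in lborel. norm (u x * gauge_average u x (rs k)) \<le> u x * u x + \<bar>C\<bar> * \<bar>u x\<bar>" for k
    using bounded
  proof eventually_elim
    case (elim x)
    then have "\<bar>gauge_average u x (rs k)\<bar> \<le> \<bar>u x\<bar> + \<bar>C\<bar>"
      using rs(2)[of k] by fastforce
    then have "\<bar>u x\<bar> * \<bar>gauge_average u x (rs k)\<bar> \<le> \<bar>u x\<bar> * (\<bar>u x\<bar> + \<bar>C\<bar>)"
      by (rule mult_left_mono) simp
    then show ?case
      by (simp add: abs_mult algebra_simps)
  qed
qed

theorem gauge_autocorrelation_eq_0_imp_AE_eq_0:
  assumes u: "integrable lborel u" and u2: "integrable lborel (\<lambda>x. (u x)\<^sup>2)"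
    and osc: "gauge_osc_bounded u"
    and zero: "\<And>r. 0 < r \<Longrightarrow>
      (\<integral>x. u x * (\<integral>v. u (x + v) * indicator (gauge_ball r) v \<partial>lborel) \<partial>lborel) = 0"
  shows "AE x in lborel. u x = 0"
proof -
  obtain r0 C where "r0 > 0" and bounded: "AE x in lborel. \<forall>r\<in>{0<..<r0}. \<bar>gauge_average u x r - u x\<bar> \<le> C"
    using gauge_osc_bounded_imp_average_bounded[OF osc u] by blast
  define rs where "rs k = r0 / real (Suc (Suc k))" for k :: nat
  have rs: "rs k \<in> {0<..<r0}" for k
    using \<open>r0 > 0\<close> by (simp add: rs_def field_simps add_pos_nonneg)
  have "(rs \<longlongrightarrow> 0) sequentially"
    unfolding rs_def by (intro LIMSEQ_Suc lim_const_over_n)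
  moreover have "\<forall>k. rs k \<in> {0<..} \<and> rs k \<noteq> 0"
    using rs by (metis greaterThanLessThan_iff greaterThan_iff less_irrefl)
  ultimately have rs_lim: "filterlim rs (at_right 0) sequentially"
    unfolding filterlim_at by (auto intro: always_eventually)
  have "(\<lambda>k. \<integral>x. u x * gauge_average u x (rs k) \<partial>lborel) \<longlonglongrightarrow> (\<integral>x. u x * u x \<partial>lborel)"
    by (rule tendsto_integral_mult_gauge_average[OF u u2 bounded rs_lim rs])
  moreover have "(\<integral>x. u x * gauge_average u x (rs k) \<partial>lborel) = 0" for k
    using zero[of "rs k"] rs[of k] by (simp add: gauge_average_def)
  ultimately have "(\<integral>x. u x * u x \<partial>lborel) = 0"
    by (simp add: LIMSEQ_const_iff)
  moreover have "integrable lborel (\<lambda>x. u x * u x)"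
    using u2 by (simp add: power2_eq_square)
  ultimately show ?thesis
    by (simp add: integral_nonneg_eq_0_iff_AE)
qed

end

lemma integrable_square_diff:
  fixes f g :: "'a \<Rightarrow> real"
  assumes "integrable M (\<lambda>x. (f x)\<^sup>2)" "integrable M (\<lambda>x. (g x)\<^sup>2)"
    and [measurable]: "f \<in> borel_measurable M" "g \<in> borel_measurable M"
  shows "integrable M (\<lambda>x. (f x - g x)\<^sup>2)"
proof (rule Bochner_Integration.integrable_bound)
  show "integrable M (\<lambda>x. 2 * (f x)\<^sup>2 + 2 * (g x)\<^sup>2)"
    using assms(1,2) by simp
  show "AE x in M. norm ((f x - g x)\<^sup>2) \<le> norm (2 * (f x)\<^sup>2 + 2 * (g x)\<^sup>2)"
  proof (rule AE_I2)
    fix x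
    have "(f x - g x)\<^sup>2 \<le> 2 * (f x)\<^sup>2 + 2 * (g x)\<^sup>2"
      using zero_le_power2[of "f x + g x"] by (simp add: power2_eq_square algebra_simps)
    then show "norm ((f x - g x)\<^sup>2) \<le> norm (2 * (f x)\<^sup>2 + 2 * (g x)\<^sup>2)"
      by simp
  qed
qed simp

section \<open>Laws of functions of independent pairs\<close>

lemma (in prob_space) indep_vars_imp_indep_var:
  assumes "indep_vars (\<lambda>_. N) X I" "i \<in> I" "j \<in> I" "i \<noteq> j"
  shows "indep_var N (X i) N (X j)"
proof -
  let ?F = "\<lambda>k. sigma_sets (space M) {X k -` A \<inter> space M | A. A \<in> sets N}"
  have rv: "\<forall>k\<in>I. random_variable N (X k)" and ind: "indep_sets ?F I"
    using assms(1) unfolding indep_vars_def by auto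
  show ?thesis
    unfolding indep_var_eq indep_sets2_eq
  proof (intro conjI ballI)
    show "random_variable N (X i)" "random_variable N (X j)"
      using rv assms by auto
    show "?F i \<subseteq> events" "?F j \<subseteq> events"
      using ind assms unfolding indep_sets_def by auto
    fix a b assume "a \<in> ?F i" "b \<in> ?F j"
    then have "prob (\<Inter>k\<in>{i, j}. if k = i then a else b) = (\<Prod>k\<in>{i, j}. prob (if k = i then a else b))"
      using assms by (intro indep_setsD[OF ind]) auto
    then show "prob (a \<inter> b) = prob a * prob b"
      using assms(4) by (simp add: Int_commute)
  qed
qed

lemma distr_indep_pair_density:
  fixes a b :: "'a::euclidean_space \<Rightarrow> real"
  assumes "prob_space M"
    and X: "distributed M lborel X (\<lambda>x. ennreal (a x))"
    and Y: "distributed M lborel Y (\<lambda>x. ennreal (b x))"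
    and "prob_space.indep_var M borel X borel Y"
    and H: "H \<in> borel_measurable (borel \<Otimes>\<^sub>M borel)"
  shows "distr M borel (\<lambda>\<omega>. H (X \<omega>, Y \<omega>))
    = distr (density lborel (\<lambda>x. ennreal (a x)) \<Otimes>\<^sub>M density lborel (\<lambda>x. ennreal (b x))) borel H"
proof -
  interpret prob_space M by fact
  have [measurable]: "X \<in> measurable M borel" "Y \<in> measurable M borel"
    using distributed_measurable[OF X] distributed_measurable[OF Y] by simp_all
  have "distr M borel X = density lborel (\<lambda>x. ennreal (a x))"
    using distributed_distr_eq_density[OF X] by (metis distr_cong sets_lborel)
  moreover have "distr M borel Y = density lborel (\<lambda>x. ennreal (b x))"
    using distributed_distr_eq_density[OF Y] by (metis distr_cong sets_lborel)
  moreover have "distr M borel X \<Otimes>\<^sub>M distr M borel Y = distr M (borel \<Otimes>\<^sub>M borel) (\<lambda>\<omega>. (X \<omega>, Y \<omega>))"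
    using assms(4) indep_var_distribution_eq by auto
  moreover have "distr M borel (\<lambda>\<omega>. H (X \<omega>, Y \<omega>)) = distr (distr M (borel \<Otimes>\<^sub>M borel) (\<lambda>\<omega>. (X \<omega>, Y \<omega>))) borel H"
    using H by (subst distr_distr) (auto simp: comp_def)
  ultimately show ?thesis
    by simp
qed

lemma emeasure_distr_pair_density_lessThan:
  fixes a b :: "'a::euclidean_space \<Rightarrow> real" and H :: "'a \<times> 'a \<Rightarrow> real"
  assumes "prob_space (density lborel (\<lambda>x. ennreal (b x)))"
    and [measurable]: "a \<in> borel_measurable borel" "b \<in> borel_measurable borel"
      "H \<in> borel_measurable (borel \<Otimes>\<^sub>M borel)"
  shows "emeasure (distr (density lborel (\<lambda>x. ennreal (a x)) \<Otimes>\<^sub>M density lborel (\<lambda>x. ennreal (b x))) borel H) {..<t}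
    = (\<integral>\<^sup>+x. ennreal (a x) * (\<integral>\<^sup>+y. ennreal (b y) * indicator {y. H (x, y) < t} y \<partial>lborel) \<partial>lborel)"
proof -
  let ?Da = "density lborel (\<lambda>x. ennreal (a x))"
  let ?Db = "density lborel (\<lambda>x. ennreal (b x))"
  interpret Db: prob_space ?Db by fact
  have sets_eq: "sets (?Da \<Otimes>\<^sub>M ?Db) = sets (borel \<Otimes>\<^sub>M borel)"
    by (intro sets_pair_measure_cong) auto
  have H_meas: "H \<in> measurable (?Da \<Otimes>\<^sub>M ?Db) borel"
    by (subst measurable_cong_sets[OF sets_eq refl]) simp
  define S where "S = H -` {..<t} \<inter> space (?Da \<Otimes>\<^sub>M ?Db)"
  have S: "S \<in> sets (?Da \<Otimes>\<^sub>M ?Db)"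
    unfolding S_def by (rule measurable_sets[OF H_meas]) (simp add: borel_open)
  have "emeasure (distr (?Da \<Otimes>\<^sub>M ?Db) borel H) {..<t} = emeasure (?Da \<Otimes>\<^sub>M ?Db) S"
    unfolding S_def by (rule emeasure_distr[OF H_meas]) (simp add: borel_open)
  also have "\<dots> = (\<integral>\<^sup>+x. emeasure ?Db (Pair x -` S) \<partial>?Da)"
    by (rule Db.emeasure_pair_measure_alt[OF S])
  also have "\<dots> = (\<integral>\<^sup>+x. ennreal (a x) * emeasure ?Db (Pair x -` S) \<partial>lborel)"
    using Db.measurable_emeasure_Pair[OF S]
    by (intro nn_integral_density) (simp_all add: measurable_cong_sets[OF sets_density refl])
  also have "\<dots> = (\<integral>\<^sup>+x. ennreal (a x) * (\<integral>\<^sup>+y. ennreal (b y) * indicator {y. H (x, y) < t} y \<partial>lborel) \<partial>lborel)"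
  proof (rule nn_integral_cong)
    fix x
    have "Pair x -` S = {y. H (x, y) < t}"
      by (auto simp: S_def space_pair_measure)
    moreover have "{y. H (x, y) < t} \<in> sets borel"
      by measurable
    ultimately show "ennreal (a x) * emeasure ?Db (Pair x -` S)
        = ennreal (a x) * (\<integral>\<^sup>+y. ennreal (b y) * indicator {y. H (x, y) < t} y \<partial>lborel)"
      by (simp add: emeasure_density)
  qed
  finally show ?thesis .
qed

lemma nn_integral_kernel_swap:
  fixes a b :: "'a::euclidean_space \<Rightarrow> ennreal" and K :: "'a \<Rightarrow> 'a \<Rightarrow> real"
  assumes [measurable]: "a \<in> borel_measurable lborel" "b \<in> borel_measurable lborel"
    "(\<lambda>p. K (fst p) (snd p)) \<in> borel_measurable (lborel \<Otimes>\<^sub>M lborel)"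
    and sym: "\<And>x y. K x y = K y x"
  shows "(\<integral>\<^sup>+x. a x * (\<integral>\<^sup>+y. b y * ennreal (K x y) \<partial>lborel) \<partial>lborel)
    = (\<integral>\<^sup>+y. b y * (\<integral>\<^sup>+x. a x * ennreal (K y x) \<partial>lborel) \<partial>lborel)"
proof -
  have [measurable]: "(\<lambda>(x, y). a x * (b y * ennreal (K x y))) \<in> borel_measurable (lborel \<Otimes>\<^sub>M lborel)"
    by (simp add: split_beta')
  have [measurable]: "K x \<in> borel_measurable lborel" for x
    using measurable_Pair2[of "\<lambda>p. K (fst p) (snd p)" lborel lborel lborel x] by simp
  have "(\<integral>\<^sup>+x. a x * (\<integral>\<^sup>+y. b y * ennreal (K x y) \<partial>lborel) \<partial>lborel)
      = (\<integral>\<^sup>+x. (\<integral>\<^sup>+y. a x * (b y * ennreal (K x y)) \<partial>lborel) \<partial>lborel)"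
    by (intro nn_integral_cong nn_integral_cmult[symmetric]) simp
  also have "\<dots> = (\<integral>\<^sup>+y. (\<integral>\<^sup>+x. a x * (b y * ennreal (K x y)) \<partial>lborel) \<partial>lborel)"
    by (rule lborel_pair.Fubini'[symmetric]) simp
  also have "\<dots> = (\<integral>\<^sup>+y. b y * (\<integral>\<^sup>+x. a x * ennreal (K y x) \<partial>lborel) \<partial>lborel)"
    by (intro nn_integral_cong) (simp add: sym ac_simps flip: nn_integral_cmult)
  finally show ?thesis .
qed

lemma
  fixes a b :: "'a::euclidean_space \<Rightarrow> real" and K :: "'a \<Rightarrow> 'a \<Rightarrow> real"
  assumes a: "integrable lborel a" "\<And>x. 0 \<le> a x" and b: "integrable lborel b" "\<And>x. 0 \<le> b x"
    and K: "(\<lambda>p. K (fst p) (snd p)) \<in> borel_measurable (lborel \<Otimes>\<^sub>M lborel)"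
      "\<And>x y. 0 \<le> K x y" "\<And>x y. K x y \<le> 1"
  shows nn_integral_kernel_eq_integral: "(\<integral>\<^sup>+x. ennreal (a x) * (\<integral>\<^sup>+y. ennreal (b y) * ennreal (K x y) \<partial>lborel) \<partial>lborel)
           = ennreal (\<integral>x. a x * (\<integral>y. b y * K x y \<partial>lborel) \<partial>lborel)"
    and integrable_kernel: "integrable lborel (\<lambda>x. a x * (\<integral>y. b y * K x y \<partial>lborel))"
proof -
  have [measurable]: "a \<in> borel_measurable lborel" "b \<in> borel_measurable lborel"
    using a(1) b(1) by (simp_all add: borel_measurable_integrable)
  note K(1)[measurable]
  have [measurable]: "K x \<in> borel_measurable lborel" for x
    using measurable_Pair2[of "\<lambda>p. K (fst p) (snd p)" lborel lborel lborel x] by simp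
  define F where "F x = (\<integral>y. b y * K x y \<partial>lborel)" for x
  have int_bK: "integrable lborel (\<lambda>y. b y * K x y)" for x
    by (rule Bochner_Integration.integrable_bound[OF b(1)])
      (use K b(2) in \<open>auto simp: abs_mult intro!: mult_left_le\<close>)
  have F_bounds: "0 \<le> F x" "F x \<le> (\<integral>y. b y \<partial>lborel)" for x
    unfolding F_def using K b
    by (auto intro!: integral_nonneg_AE integral_mono[OF int_bK b(1)] mult_left_le)
  have [measurable]: "F \<in> borel_measurable lborel"
    unfolding F_def by (rule lborel.borel_measurable_lebesgue_integral) (simp add: split_beta')
  show int_aF: "integrable lborel (\<lambda>x. a x * (\<integral>y. b y * K x y \<partial>lborel))"
    unfolding F_def[symmetric]
    by (rule Bochner_Integration.integrable_bound[of _ "\<lambda>x. a x * (\<integral>y. b y \<partial>lborel)"])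
      (use a F_bounds in \<open>auto simp: abs_mult intro!: mult_left_mono order_trans[OF F_bounds(2) abs_ge_self]\<close>)
  have "(\<integral>\<^sup>+y. ennreal (b y) * ennreal (K x y) \<partial>lborel) = ennreal (F x)" for x
    unfolding F_def using b(2) K(2)
    by (subst nn_integral_eq_integral[OF int_bK, symmetric]) (auto intro!: nn_integral_cong simp: ennreal_mult)
  then have "(\<integral>\<^sup>+x. ennreal (a x) * (\<integral>\<^sup>+y. ennreal (b y) * ennreal (K x y) \<partial>lborel) \<partial>lborel)
      = (\<integral>\<^sup>+x. ennreal (a x * F x) \<partial>lborel)"
    using a(2) F_bounds by (simp add: ennreal_mult)
  also have "\<dots> = ennreal (\<integral>x. a x * F x \<partial>lborel)"
    using int_aF a(2) F_bounds unfolding F_def[symmetric] by (intro nn_integral_eq_integral) auto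
  finally show "(\<integral>\<^sup>+x. ennreal (a x) * (\<integral>\<^sup>+y. ennreal (b y) * ennreal (K x y) \<partial>lborel) \<partial>lborel)
           = ennreal (\<integral>x. a x * (\<integral>y. b y * K x y \<partial>lborel) \<partial>lborel)"
    by (simp add: F_def)
qed

lemma integral_kernel_diff_eq_0:
  fixes f g :: "'a::euclidean_space \<Rightarrow> real" and K :: "'a \<Rightarrow> 'a \<Rightarrow> real"
  assumes f: "integrable lborel f" "\<And>x. 0 \<le> f x" and g: "integrable lborel g" "\<And>x. 0 \<le> g x"
    and K: "(\<lambda>p. K (fst p) (snd p)) \<in> borel_measurable (lborel \<Otimes>\<^sub>M lborel)"
      "\<And>x y. 0 \<le> K x y" "\<And>x y. K x y \<le> 1"
    and sym: "\<And>x y. K x y = K y x"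
    and ff_gg: "(\<integral>\<^sup>+x. ennreal (f x) * (\<integral>\<^sup>+y. ennreal (f y) * ennreal (K x y) \<partial>lborel) \<partial>lborel)
      = (\<integral>\<^sup>+x. ennreal (g x) * (\<integral>\<^sup>+y. ennreal (g y) * ennreal (K x y) \<partial>lborel) \<partial>lborel)"
    and gg_fg: "(\<integral>\<^sup>+x. ennreal (g x) * (\<integral>\<^sup>+y. ennreal (g y) * ennreal (K x y) \<partial>lborel) \<partial>lborel)
      = (\<integral>\<^sup>+x. ennreal (f x) * (\<integral>\<^sup>+y. ennreal (g y) * ennreal (K x y) \<partial>lborel) \<partial>lborel)"
  shows "(\<integral>x. (f x - g x) * (\<integral>y. (f y - g y) * K x y \<partial>lborel) \<partial>lborel) = 0"
proof -
  have [measurable]: "f \<in> borel_measurable lborel" "g \<in> borel_measurable lborel"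
    using f(1) g(1) by (simp_all add: borel_measurable_integrable)
  note K(1)[measurable]
  have [measurable]: "K x \<in> borel_measurable lborel" for x
    using measurable_Pair2[of "\<lambda>p. K (fst p) (snd p)" lborel lborel lborel x] by simp
  define R where "R a b = (\<integral>x. a x * (\<integral>y. b y * K x y \<partial>lborel) \<partial>lborel)" for a b :: "'a \<Rightarrow> real"
  have R_nonneg: "0 \<le> R a b" if "\<And>x. 0 \<le> a x" "\<And>x. 0 \<le> b x" for a b
    unfolding R_def using that K by (auto intro!: integral_nonneg_AE)
  note nn_R = nn_integral_kernel_eq_integral[OF _ _ _ _ K, folded R_def]
  have R_eqs: "R f f = R g g" "R g g = R f g"
    using ff_gg gg_fg R_nonneg f(2) g(2) by (simp_all add: nn_R f g)
  have R_swap: "R g f = R f g"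
    using nn_integral_kernel_swap[of "\<lambda>x. ennreal (g x)" "\<lambda>x. ennreal (f x)" K] sym R_nonneg f(2) g(2)
    by (simp add: nn_R f g)
  have int_K: "integrable lborel (\<lambda>y. b y * K x y)" if "integrable lborel b" for b x
  proof (rule Bochner_Integration.integrable_bound[OF that])
    show "(\<lambda>y. b y * K x y) \<in> borel_measurable lborel"
      using borel_measurable_integrable[OF that] by measurable
  qed (use K in \<open>auto simp: abs_mult intro!: mult_left_le\<close>)
  then have "(\<integral>x. (f x - g x) * (\<integral>y. (f y - g y) * K x y \<partial>lborel) \<partial>lborel)
      = (\<integral>x. (f x * (\<integral>y. f y * K x y \<partial>lborel) - f x * (\<integral>y. g y * K x y \<partial>lborel))
          - (g x * (\<integral>y. f y * K x y \<partial>lborel) - g x * (\<integral>y. g y * K x y \<partial>lborel)) \<partial>lborel)"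
    using f g by (intro Bochner_Integration.integral_cong) (simp_all add: left_diff_distrib right_diff_distrib)
  also have "\<dots> = (R f f - R f g) - (R g f - R g g)"
    unfolding R_def using f g K
    by (simp add: integrable_kernel)
  finally show ?thesis
    using R_eqs R_swap by simp
qed

lemma
  fixes f :: "'a::euclidean_space \<Rightarrow> real"
  assumes "prob_space M" "distributed M lborel X (\<lambda>x. ennreal (f x))" "\<And>x. 0 \<le> f x"
  shows prob_space_density_distributed: "prob_space (density lborel (\<lambda>x. ennreal (f x)))"
    and integrable_density_distributed: "integrable lborel f"
proof -
  have "X \<in> measurable M lborel"
    using distributed_measurable[OF assms(2)] by simp
  then show prob: "prob_space (density lborel (\<lambda>x. ennreal (f x)))"
    using prob_space.prob_space_distr[OF assms(1)] distributed_distr_eq_density[OF assms(2)] by metis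
  have [measurable]: "(\<lambda>x. ennreal (f x)) \<in> borel_measurable lborel"
    using distributed_borel_measurable[OF assms(2)] .
  have "(\<integral>\<^sup>+x. ennreal (f x) \<partial>lborel) = emeasure (density lborel (\<lambda>x. ennreal (f x))) UNIV"
    by (simp add: emeasure_density)
  also have "\<dots> = 1"
    using prob_space.emeasure_space_1[OF prob] by simp
  finally show "integrable lborel f"
    using distributed_borel_measurable[OF assms(2)] assms(3)
    by (intro integrableI_nonneg) auto
qed

section \<open>Characterisation by the laws of distances\<close>

lemma homogeneous_gauge_distance:
  assumes "distance_fun d" and hti: "homog_transl_inv d"
  shows "homogeneous_gauge (d 0)" and "d x y = d 0 (y - x)"
proof -
  have scale: "d (c *\<^sub>R p + b) (c *\<^sub>R q + b) = \<bar>c\<bar> * d p q" for c p q b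
    using hti unfolding homog_transl_inv_def by blast
  show "d x y = d 0 (y - x)"
    using scale[where c=1 and p=0 and q="y - x" and b=x] by simp
  have "continuous_on UNIV (\<lambda>p. d (fst p) (snd p))"
    using assms(1) by (simp add: distance_fun_def)
  then have "continuous_on UNIV (\<lambda>v. (\<lambda>p. d (fst p) (snd p)) (0, v))"
    by (rule continuous_on_compose2) (auto intro: continuous_on_Pair continuous_on_const continuous_on_id)
  then show "homogeneous_gauge (d 0)"
    using assms(1) scale[where p=0 and b=0] unfolding distance_fun_def by unfold_locales auto
qed

context homogeneous_gauge
begin

lemma hball_gauge_comp:
  assumes "strict_mono_on {0..} \<gamma>" "0 \<le> r"
  shows "hball (\<lambda>x y. \<gamma> (N (y - x))) x (\<gamma> r) = {y. y - x \<in> gauge_ball r}"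
  using strict_mono_on_less[OF assms(1)] nonneg assms(2) by (auto simp: hball_def gauge_ball_def)

lemma nn_integral_gauge_ball_le_centered_osc:
  fixes \<gamma> :: "real \<Rightarrow> real"
  assumes [measurable]: "u \<in> borel_measurable borel"
    and \<gamma>: "strict_mono_on {0..} \<gamma>" "\<gamma> 0 = 0" and r: "0 < r" "\<gamma> r < \<epsilon>"
    and osc: "centered_osc (\<lambda>x y. \<gamma> (N (y - x))) u x \<epsilon> < ennreal C"
  shows "(\<integral>\<^sup>+v. ennreal \<bar>u (x + v) - u x\<bar> * indicator (gauge_ball r) v \<partial>lborel)
    \<le> ennreal C * emeasure lborel (gauge_ball r)"
proof -
  let ?h = "\<lambda>x y. \<gamma> (N (y - x))"
  have hball: "hball ?h x (\<gamma> r) = {y. y - x \<in> gauge_ball r}"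
    using \<gamma>(1) r by (intro hball_gauge_comp) auto
  have transl: "(\<integral>\<^sup>+y. F y * indicator (hball ?h x (\<gamma> r)) y \<partial>lborel)
      = (\<integral>\<^sup>+v. F (x + v) * indicator (gauge_ball r) v \<partial>lborel)"
    if [measurable]: "F \<in> borel_measurable borel" for F
    unfolding hball by (subst nn_integral_lborel_transl[of _ x]) (simp_all add: indicator_def)
  have "{y. y - x \<in> gauge_ball r} \<in> sets lborel"
    by measurable
  then have Phi: "Phi ?h x (\<gamma> r) = emeasure lborel (gauge_ball r)"
    using transl[of "\<lambda>_. 1"] by (simp add: Phi_def hball)
  have "0 < \<gamma> r"
    using strict_mono_on_less[OF \<gamma>(1), of 0 r] \<gamma>(2) r by auto
  with r have "(\<integral>\<^sup>+y. ennreal \<bar>u y - u x\<bar> * indicator (hball ?h x (\<gamma> r)) y \<partial>lborel)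
      / Phi ?h x (\<gamma> r) \<le> centered_osc ?h u x \<epsilon>"
    unfolding centered_osc_def by (intro SUP_upper) simp
  then have "(\<integral>\<^sup>+y. ennreal \<bar>u y - u x\<bar> * indicator (hball ?h x (\<gamma> r)) y \<partial>lborel) / Phi ?h x (\<gamma> r)
      < ennreal C"
    using osc by (rule le_less_trans)
  moreover have "0 < emeasure lborel (gauge_ball r)"
    using measure_gauge_ball_pos[OF r(1)] by (simp add: emeasure_gauge_ball)
  ultimately show ?thesis
    using emeasure_gauge_ball_finite[of r] by (simp add: transl Phi divide_less_ennreal)
qed

lemma unif_bdd_osc_imp_gauge_osc_bounded:
  fixes \<gamma> :: "real \<Rightarrow> real"
  assumes osc: "unif_bdd_osc (\<lambda>x y. \<gamma> (N (y - x))) u" and [measurable]: "u \<in> borel_measurable borel"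
    and \<gamma>: "continuous_on {0..} \<gamma>" "strict_mono_on {0..} \<gamma>" "\<gamma> 0 = 0"
  shows "gauge_osc_bounded u"
proof -
  obtain \<epsilon> C where "\<epsilon> > 0" "C > 0"
    and osc_AE: "AE x in lborel. centered_osc (\<lambda>x y. \<gamma> (N (y - x))) u x \<epsilon> < ennreal C"
    using osc unfolding unif_bdd_osc_def by blast
  have "(\<gamma> \<longlongrightarrow> \<gamma> 0) (at 0 within {0..})"
    using \<gamma>(1) by (simp add: continuous_on_def)
  moreover have "{0<..} \<subseteq> {0::real..}"
    by auto
  ultimately have "(\<gamma> \<longlongrightarrow> 0) (at_right 0)"
    using \<gamma>(3) by (metis tendsto_within_subset)
  then have "\<forall>\<^sub>F r in at_right 0. \<gamma> r < \<epsilon>"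
    using \<open>\<epsilon> > 0\<close> by (rule order_tendstoD)
  then obtain r1 where "r1 > 0" and r1: "\<And>r. 0 < r \<Longrightarrow> r < r1 \<Longrightarrow> \<gamma> r < \<epsilon>"
    unfolding eventually_at_right_field by blast
  have "AE x in lborel. \<forall>r\<in>{0<..<r1}.
      (\<integral>\<^sup>+v. ennreal \<bar>u (x + v) - u x\<bar> * indicator (gauge_ball r) v \<partial>lborel)
        \<le> ennreal C * emeasure lborel (gauge_ball r)"
    using osc_AE
    by eventually_elim (use r1 \<gamma>(2,3) in \<open>auto intro!: nn_integral_gauge_ball_le_centered_osc\<close>)
  with \<open>r1 > 0\<close> \<open>C > 0\<close> show ?thesis
    unfolding gauge_osc_bounded_def by (intro exI[of _ r1] exI[of _ C] conjI) auto
qed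

lemma borel_measurable_gauge_comp [measurable]:
  assumes "continuous_on {0..} \<psi>"
  shows "(\<lambda>p. \<psi> (N (snd p - fst p))) \<in> borel_measurable (borel \<Otimes>\<^sub>M borel)"
proof -
  have "continuous_on UNIV (\<lambda>p::'a \<times> 'a. N (snd p - fst p))"
    by (intro continuous_on_compose2[OF continuous_on] continuous_intros) auto
  then have "continuous_on UNIV (\<lambda>p::'a \<times> 'a. \<psi> (N (snd p - fst p)))"
    by (rule continuous_on_compose2[OF assms]) (auto simp: nonneg)
  then show ?thesis
    unfolding borel_prod by (rule borel_measurable_continuous_onI)
qed

lemma emeasure_distr_gauge_lessThan:
  fixes a b :: "'a \<Rightarrow> real" and \<psi> :: "real \<Rightarrow> real"
  assumes "prob_space (density lborel (\<lambda>x. ennreal (b x)))"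
    and [measurable]: "a \<in> borel_measurable borel" "b \<in> borel_measurable borel"
    and \<psi>: "continuous_on {0..} \<psi>" "strict_mono_on {0..} \<psi>" and "0 \<le> r"
  shows "emeasure (distr (density lborel (\<lambda>x. ennreal (a x)) \<Otimes>\<^sub>M density lborel (\<lambda>x. ennreal (b x))) borel
      (\<lambda>p. \<psi> (N (snd p - fst p)))) {..<\<psi> r}
    = (\<integral>\<^sup>+x. ennreal (a x) * (\<integral>\<^sup>+y. ennreal (b y) * ennreal (indicator (gauge_ball r) (y - x)) \<partial>lborel) \<partial>lborel)"
proof -
  have "indicator {y. \<psi> (N (y - x)) < \<psi> r} y = ennreal (indicator (gauge_ball r) (y - x))" for x y
    using strict_mono_on_less[OF \<psi>(2)] nonneg \<open>0 \<le> r\<close> by (simp add: gauge_ball_def indicator_def)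
  then show ?thesis
    using emeasure_distr_pair_density_lessThan[OF assms(1-3) borel_measurable_gauge_comp[OF \<psi>(1)]]
    by simp
qed

lemma autocorrelation_eq_0_if_distr_gauge_eq:
  fixes f g :: "'a \<Rightarrow> real" and \<psi> :: "real \<Rightarrow> real"
  assumes f: "integrable lborel f" "\<And>x. 0 \<le> f x" "prob_space (density lborel (\<lambda>x. ennreal (f x)))"
    and g: "integrable lborel g" "\<And>x. 0 \<le> g x" "prob_space (density lborel (\<lambda>x. ennreal (g x)))"
    and \<psi>: "continuous_on {0..} \<psi>" "strict_mono_on {0..} \<psi>" and "0 < r"
    and ff_gg: "distr (density lborel (\<lambda>x. ennreal (f x)) \<Otimes>\<^sub>M density lborel (\<lambda>x. ennreal (f x))) borel
        (\<lambda>p. \<psi> (N (snd p - fst p)))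
      = distr (density lborel (\<lambda>x. ennreal (g x)) \<Otimes>\<^sub>M density lborel (\<lambda>x. ennreal (g x))) borel
        (\<lambda>p. \<psi> (N (snd p - fst p)))"
    and gg_fg: "distr (density lborel (\<lambda>x. ennreal (g x)) \<Otimes>\<^sub>M density lborel (\<lambda>x. ennreal (g x))) borel
        (\<lambda>p. \<psi> (N (snd p - fst p)))
      = distr (density lborel (\<lambda>x. ennreal (f x)) \<Otimes>\<^sub>M density lborel (\<lambda>x. ennreal (g x))) borel
        (\<lambda>p. \<psi> (N (snd p - fst p)))"
  shows "(\<integral>x. (f x - g x) * (\<integral>v. (f (x + v) - g (x + v)) * indicator (gauge_ball r) v \<partial>lborel) \<partial>lborel) = 0"
proof -
  have [measurable]: "f \<in> borel_measurable borel" "g \<in> borel_measurable borel"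
    using f(1) g(1) by (simp_all add: borel_measurable_integrable)
  define K where "K x y = (indicator (gauge_ball r) (y - x) :: real)" for x y
  have K: "(\<lambda>p. K (fst p) (snd p)) \<in> borel_measurable (lborel \<Otimes>\<^sub>M lborel)"
    "\<And>x y. 0 \<le> K x y" "\<And>x y. K x y \<le> 1" "\<And>x y. K x y = K y x"
    using minus_invariant[of "_ - _"] by (auto simp: K_def gauge_ball_def split: split_indicator)
  note law = emeasure_distr_gauge_lessThan[OF _ _ _ \<psi>, of _ _ r, folded K_def]
  have "(\<integral>x. (f x - g x) * (\<integral>y. (f y - g y) * K x y \<partial>lborel) \<partial>lborel) = 0"
    using arg_cong[OF ff_gg, of "\<lambda>\<mu>. emeasure \<mu> {..<\<psi> r}"] arg_cong[OF gg_fg, of "\<lambda>\<mu>. emeasure \<mu> {..<\<psi> r}"]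
      \<open>0 < r\<close> f g
    by (intro integral_kernel_diff_eq_0[OF f(1,2) g(1,2) K]) (simp_all add: law)
  moreover have "(\<integral>y. (f y - g y) * K x y \<partial>lborel)
      = (\<integral>v. (f (x + v) - g (x + v)) * indicator (gauge_ball r) v \<partial>lborel)" for x
    unfolding K_def by (subst integral_lborel_transl[of _ x]) simp_all
  ultimately show ?thesis
    by simp
qed

theorem AE_eq_iff_distr_gauge_eq:
  fixes M :: "'w measure" and X1 X2 X3 Y1 Y2 Y3 :: "'w \<Rightarrow> 'a"
    and f g :: "'a \<Rightarrow> real" and \<psi> :: "real \<Rightarrow> real"
  assumes M: "prob_space M"
    and f: "\<And>x. 0 \<le> f x" "integrable lborel (\<lambda>x. (f x)\<^sup>2)" "gauge_osc_bounded f"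
    and g: "\<And>x. 0 \<le> g x" "integrable lborel (\<lambda>x. (g x)\<^sup>2)" "gauge_osc_bounded g"
    and X: "\<And>X. X \<in> {X1, X2, X3} \<Longrightarrow> distributed M lborel X (\<lambda>x. ennreal (f x))"
    and Y: "\<And>Y. Y \<in> {Y1, Y2, Y3} \<Longrightarrow> distributed M lborel Y (\<lambda>x. ennreal (g x))"
    and indep: "prob_space.indep_var M borel X1 borel X2" "prob_space.indep_var M borel Y1 borel Y2"
      "prob_space.indep_var M borel X3 borel Y3"
    and \<psi>: "continuous_on {0..} \<psi>" "strict_mono_on {0..} \<psi>"
  shows "(AE x in lborel. f x = g x) \<longleftrightarrow>
    (distr M borel (\<lambda>\<omega>. \<psi> (N (X2 \<omega> - X1 \<omega>))) = distr M borel (\<lambda>\<omega>. \<psi> (N (Y2 \<omega> - Y1 \<omega>))) \<and>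
     distr M borel (\<lambda>\<omega>. \<psi> (N (Y2 \<omega> - Y1 \<omega>))) = distr M borel (\<lambda>\<omega>. \<psi> (N (Y3 \<omega> - X3 \<omega>))))"
proof -
  have f_int: "integrable lborel f" and f_prob: "prob_space (density lborel (\<lambda>x. ennreal (f x)))"
    using integrable_density_distributed[OF M X f(1)] prob_space_density_distributed[OF M X f(1)] by auto
  have g_int: "integrable lborel g" and g_prob: "prob_space (density lborel (\<lambda>x. ennreal (g x)))"
    using integrable_density_distributed[OF M Y g(1)] prob_space_density_distributed[OF M Y g(1)] by auto
  have [measurable]: "f \<in> borel_measurable borel" "g \<in> borel_measurable borel"
    using f_int g_int by (simp_all add: borel_measurable_integrable)
  let ?Df = "density lborel (\<lambda>x. ennreal (f x))" and ?Dg = "density lborel (\<lambda>x. ennreal (g x))"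
    and ?H = "\<lambda>p. \<psi> (N (snd p - fst p))"
  note law = distr_indep_pair_density[OF M _ _ _ borel_measurable_gauge_comp[OF \<psi>(1)]]
  have "distr M borel (\<lambda>\<omega>. \<psi> (N (X2 \<omega> - X1 \<omega>))) = distr (?Df \<Otimes>\<^sub>M ?Df) borel ?H"
    "distr M borel (\<lambda>\<omega>. \<psi> (N (Y2 \<omega> - Y1 \<omega>))) = distr (?Dg \<Otimes>\<^sub>M ?Dg) borel ?H"
    "distr M borel (\<lambda>\<omega>. \<psi> (N (Y3 \<omega> - X3 \<omega>))) = distr (?Df \<Otimes>\<^sub>M ?Dg) borel ?H"
    using law[OF X X indep(1)] law[OF Y Y indep(2)] law[OF X Y indep(3)] by simp_all
  note laws = this
  show ?thesis
    unfolding laws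
  proof
    assume "AE x in lborel. f x = g x"
    then have "?Df = ?Dg"
      by (intro density_cong) auto
    then show "distr (?Df \<Otimes>\<^sub>M ?Df) borel ?H = distr (?Dg \<Otimes>\<^sub>M ?Dg) borel ?H
        \<and> distr (?Dg \<Otimes>\<^sub>M ?Dg) borel ?H = distr (?Df \<Otimes>\<^sub>M ?Dg) borel ?H"
      by simp
  next
    assume "distr (?Df \<Otimes>\<^sub>M ?Df) borel ?H = distr (?Dg \<Otimes>\<^sub>M ?Dg) borel ?H
        \<and> distr (?Dg \<Otimes>\<^sub>M ?Dg) borel ?H = distr (?Df \<Otimes>\<^sub>M ?Dg) borel ?H"
    then have "(\<integral>x. (f x - g x) * (\<integral>v. (f (x + v) - g (x + v)) * indicator (gauge_ball r) v \<partial>lborel) \<partial>lborel) = 0"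
      if "0 < r" for r
      using autocorrelation_eq_0_if_distr_gauge_eq[OF f_int f(1) f_prob g_int g(1) g_prob \<psi> that] by blast
    moreover have "integrable lborel (\<lambda>x. (f x - g x)\<^sup>2)"
      using f(2) g(2) by (rule integrable_square_diff) simp_all
    moreover have "gauge_osc_bounded (\<lambda>x. f x - g x)"
      using f(3) g(3) by (rule gauge_osc_bounded_diff[rotated 2]) simp_all
    ultimately have "AE x in lborel. f x - g x = 0"
      using f_int g_int by (intro gauge_autocorrelation_eq_0_imp_AE_eq_0) auto
    then show "AE x in lborel. f x = g x"
      by simp
  qed
qed

end

theorem corollary1:
  fixes M :: "'w measure"
    and X Y :: "nat \<Rightarrow> 'w \<Rightarrow> real ^ 'k"
    and f g :: "real ^ 'k \<Rightarrow> real"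
    and d :: "real ^ 'k \<Rightarrow> real ^ 'k \<Rightarrow> real"
    and \<gamma> :: "real \<Rightarrow> real"
    and h :: "real ^ 'k \<Rightarrow> real ^ 'k \<Rightarrow> real"
  assumes P: "prob_space M"
    and f_nonneg: "\<And>x. f x \<ge> 0" and g_nonneg: "\<And>x. g x \<ge> 0"
    and f_meas: "f \<in> borel_measurable lborel" and g_meas: "g \<in> borel_measurable lborel"
    and f_L2: "integrable lborel (\<lambda>x. (f x)\<^sup>2)"
    and g_L2: "integrable lborel (\<lambda>x. (g x)\<^sup>2)"
    and X_dens: "\<And>i. i \<in> {1,2,3} \<Longrightarrow> distributed M lborel (X i) (\<lambda>x. ennreal (f x))"
    and Y_dens: "\<And>i. i \<in> {1,2,3} \<Longrightarrow> distributed M lborel (Y i) (\<lambda>x. ennreal (g x))"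
    and X_indep: "prob_space.indep_vars M (\<lambda>_. borel) X {1,2,3}"
    and Y_indep: "prob_space.indep_vars M (\<lambda>_. borel) Y {1,2,3}"
    and XY_indep: "\<And>i j. i \<in> {1,2,3} \<Longrightarrow> j \<in> {1,2,3} \<Longrightarrow>
                      prob_space.indep_var M borel (X i) borel (Y j)"
    and d_dist: "distance_fun d"
    and d_hti: "homog_transl_inv d"
    and \<gamma>_cont: "continuous_on {0..} \<gamma>"
    and \<gamma>_mono: "strict_mono_on {0..} \<gamma>"
    and \<gamma>_0: "\<gamma> 0 = 0"
    and \<gamma>_range: "\<gamma> ` {0..} \<subseteq> {0..}"
    and h_def: "h = (\<lambda>x y. \<gamma> (d x y))"
    and f_osc: "unif_bdd_osc h f"
    and g_osc: "unif_bdd_osc h g"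
  shows "(AE x in lborel. f x = g x) \<longleftrightarrow>
           (distr M borel (\<lambda>\<omega>. h (X 1 \<omega>) (X 2 \<omega>)) = distr M borel (\<lambda>\<omega>. h (Y 1 \<omega>) (Y 2 \<omega>)) \<and>
            distr M borel (\<lambda>\<omega>. h (Y 1 \<omega>) (Y 2 \<omega>)) = distr M borel (\<lambda>\<omega>. h (X 3 \<omega>) (Y 3 \<omega>)))"
proof -
  have gauge: "homogeneous_gauge (d 0)"
    using d_dist d_hti by (rule homogeneous_gauge_distance)
  have h: "h = (\<lambda>x y. \<gamma> (d 0 (y - x)))"
  proof (intro ext)
    fix x y
    show "h x y = \<gamma> (d 0 (y - x))"
      using homogeneous_gauge_distance(2)[OF d_dist d_hti, of x y] h_def by simp
  qed
  have osc: "homogeneous_gauge.gauge_osc_bounded (d 0) f" "homogeneous_gauge.gauge_osc_bounded (d 0) g"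
    using f_osc g_osc f_meas g_meas \<gamma>_cont \<gamma>_mono \<gamma>_0
    by (auto simp: h intro!: homogeneous_gauge.unif_bdd_osc_imp_gauge_osc_bounded[OF gauge])
  have indep: "prob_space.indep_var M borel (X 1) borel (X 2)" "prob_space.indep_var M borel (Y 1) borel (Y 2)"
    using prob_space.indep_vars_imp_indep_var[OF P X_indep] prob_space.indep_vars_imp_indep_var[OF P Y_indep]
    by auto
  have "(AE x in lborel. f x = g x) \<longleftrightarrow>
    (distr M borel (\<lambda>\<omega>. \<gamma> (d 0 (X 2 \<omega> - X 1 \<omega>))) = distr M borel (\<lambda>\<omega>. \<gamma> (d 0 (Y 2 \<omega> - Y 1 \<omega>))) \<and>
     distr M borel (\<lambda>\<omega>. \<gamma> (d 0 (Y 2 \<omega> - Y 1 \<omega>))) = distr M borel (\<lambda>\<omega>. \<gamma> (d 0 (Y 3 \<omega> - X 3 \<omega>))))"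
    by (rule homogeneous_gauge.AE_eq_iff_distr_gauge_eq[OF gauge P f_nonneg f_L2 osc(1) g_nonneg g_L2 osc(2)])
      (use X_dens Y_dens XY_indep indep \<gamma>_cont \<gamma>_mono in auto)
  then show ?thesis
    by (simp add: h)
qed

end
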